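(* The set $\max(\mathbb{D})$ of maximal elements of $\mathbb{D}$ is contained in $C_\Phi$.
   Context: Fix a finite set $\mathrm{Act}$ of events. For a dcpo $D$, $K(D)$ denotes its compact elements; a bifinite (SFP) domain is an algebraic dcpo in which for each finite $F\subseteq K(D)$ iterated minimal-upper-bound sets are finite and in $K(D)$ and every upper bound of $F$ is above a minimal upper bound. Scott topology: sets $U={\uparrow}(U\cap K(D))$; Lawson topology generated by ${\uparrow}k\setminus{\uparrow}l$, $k,l\in K(D)$. Mixed powerdomain $\mathcal{M}(D)$: pairs $(L,U)$, $L$ Scott-closed, $U$ Lawson-closed upper, $L={\downarrow}(L\cap U)$, ordered by $L\subseteq L'$ and $U'\subseteq U$. $\mathbb{D}$ is the initial solution over bifinite domains of $\mathbb{D}\cong\prod_{\alpha\in\mathrm{Act}}\mathcal{M}(\mathbb{D})$, $d=((L^d_\alpha,U^d_\alpha))_\alpha$, viewed as a mixed transition system $(\mathbb{D},\mathbb{R}^a,\mathbb{R}^c)$ with $(d,\alpha,d')\in\mathbb{R}^a$ iff $d'\in L^d_\alpha$ and $(d,\alpha,d')\in\mathbb{R}^c$ iff $d'\in U^d_\alpha$. Hennessy–Milner logic: $\varphi::=tt\mid\neg\varphi\mid\langle\alpha\rangle\varphi\mid\varphi\wedge\varphi$; $[\alpha]\varphi:=\neg\langle\alpha\rangle\neg\varphi$, $\varphi\vee\psi:=\neg(\neg\varphi\wedge\neg\psi)$; empty conjunction $tt$, empty disjunction $\neg tt$. For $m\in\{a,c\}$ ($\neg a=c$, $\neg c=a$):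 $(\mathbb{D},d)\models^m tt$; $\models^m\neg\varphi$ iff not $\models^{\neg m}\varphi$; $(\mathbb{D},d)\models^m\langle\alpha\rangle\varphi$ iff $(\mathbb{D},d')\models^m\varphi$ for some $(d,\alpha,d')\in\mathbb{R}^m$; $\wedge$ componentwise. $[\![\varphi]\!]^m=\{d : (\mathbb{D},d)\models^m\varphi\}$. Process terms $p::=\mathbf{0}\mid\bot\mid\alpha_{tt}.p\mid\alpha_\bot.p\mid p+p$ (no summand of $+$ equal to $\mathbf{0}$ or $\bot$). Transitions: $\bot\xrightarrow{\gamma}_\bot\bot$ for all $\gamma$; $\alpha_{tt}.p\xrightarrow{\alpha}_{tt}p$; $\alpha_\bot.p\xrightarrow{\alpha}_\bot p$; if $p\xrightarrow{\alpha}_v p'$ then $p+q\xrightarrow{\alpha}_v p'$ and $q+p\xrightarrow{\alpha}_v p'$. Formulas: $\varphi_{\mathbf{0}}=\bigwedge_\alpha\neg\langle\alpha\rangle tt$; $\varphi_\bot=tt$; $\varphi_{\alpha_{tt}.p}=\langle\alpha\rangle\varphi_p\wedge[\alpha]\varphi_p\wedge\bigwedge_{\beta\ne\alpha}\neg\langle\beta\rangle tt$; $\varphi_{\alpha_\bot.p}=[\alpha]\varphi_p\wedge\bigwedge_{\beta\ne\alpha}\neg\langle\beta\rangle tt$; $\varphi_{p+q}=\bigwedge\{\langle\alpha\rangle\varphi_{r'} : p+q\xrightarrow{\alpha}_{tt}r'\}\wedge\bigwedge_\alpha[\alpha]\bigvee\{\varphi_{r'} : p+q\xrightarrow{\alpha}_v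 r',\ v\in\{\bot,tt\}\}$. For $w=\delta_1\cdots\delta_n\in\mathrm{Act}^*$, $\alpha\in\mathrm{Act}$, term $p$: $\psi_{w,\alpha,p}=[\delta_1]\cdots[\delta_n](\langle\alpha\rangle\varphi_p\vee\neg\langle\alpha\rangle\varphi_p)$; $\Phi$ is the set of all such formulas; $C_\Phi=\bigcap_{\psi\in\Phi}[\![\psi]\!]^a$. *)

theory Defs
  imports Main "HOL-Library.FSet"
begin

section \<open>The initial solution \<D> of D = prod_{alpha in Act} M(D), as a concrete bilimit\<close>

text \<open>Act is the type variable 'a of class enum (a finite type with an enumeration).
Elements of the finite approximants D_n are represented as trees:
D_0 = {Bot}, D_(n+1) = prod_alpha M(D_n), an element being Nd f with
f alpha = (L,U) a mixed-powerdomain pair of (finite) subsets of D_n.\<close>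

datatype 'a el = Bot | Nd "'a \<Rightarrow> 'a el fset \<times> 'a el fset"

fun le :: "'a el \<Rightarrow> 'a el \<Rightarrow> bool" where
  "le Bot Bot = True"
| "le (Nd f) (Nd g) = (\<forall>\<alpha>. fst (f \<alpha>) |\<subseteq>| fst (g \<alpha>) \<and> snd (g \<alpha>) |\<subseteq>| snd (f \<alpha>))"
| "le _ _ = False"

text \<open>Mixed powerdomain of a finite poset S: L Scott-closed (= down-closed),
U Lawson-closed upper (= up-closed), L = down-closure of L \<inter> U.\<close>
definition mixedpair :: "'a el set \<Rightarrow> 'a el fset \<times> 'a el fset \<Rightarrow> bool" where
  "mixedpair S LU \<longleftrightarrow>
     fset (fst LU) \<subseteq> S \<and> fset (snd LU) \<subseteq> S \<and>
     (\<forall>x\<in>fset (fst LU). \<forall>y\<in>S. le y x \<longrightarrow> y \<in> fset (fst LU)) \<and>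
     (\<forall>x\<in>fset (snd LU). \<forall>y\<in>S. le x y \<longrightarrow> y \<in> fset (snd LU)) \<and>
     (\<forall>x\<in>fset (fst LU). \<exists>z\<in>fset (fst LU) \<inter> fset (snd LU). le x z)"

fun lvl :: "nat \<Rightarrow> 'a el set" where
  "lvl 0 = {Bot}"
| "lvl (Suc n) = {Nd f | f. \<forall>\<alpha>. mixedpair (lvl n) (f \<alpha>)}"

definition dcl :: "nat \<Rightarrow> 'a el fset \<Rightarrow> 'a el fset" where
  "dcl n A = Abs_fset {y \<in> lvl n. \<exists>x\<in>fset A. le y x}"

definition ucl :: "nat \<Rightarrow> 'a el fset \<Rightarrow> 'a el fset" where
  "ucl n A = Abs_fset {y \<in> lvl n. \<exists>x\<in>fset A. le x y}"

text \<open>Projections p_n : D_(n+1) \<rightarrow> D_n; p_0 is constant, p_(n+1) = prod_alpha M(p_n),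
where M(f)(L,U) = (down-closure of f[L], up-closure of f[U]).\<close>
fun proj :: "nat \<Rightarrow> 'a el \<Rightarrow> 'a el" where
  "proj 0 x = Bot"
| "proj (Suc n) (Nd f) =
     Nd (\<lambda>\<alpha>. (dcl n (proj n |`| fst (f \<alpha>)), ucl n (proj n |`| snd (f \<alpha>))))"
| "proj (Suc n) Bot = Bot"

definition Dinf :: "(nat \<Rightarrow> 'a el) set" where
  "Dinf = {x. \<forall>n. x n \<in> lvl n \<and> proj n (x (Suc n)) = x n}"

definition leD :: "(nat \<Rightarrow> 'a el) \<Rightarrow> (nat \<Rightarrow> 'a el) \<Rightarrow> bool" where
  "leD x y \<longleftrightarrow> (\<forall>n. le (x n) (y n))"

definition maxD :: "(nat \<Rightarrow> 'a el) set" where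
  "maxD = {x \<in> Dinf. \<forall>y\<in>Dinf. leD x y \<longrightarrow> y = x}"

text \<open>Mixed transition relations: mode True = a (may, L-component),
mode False = c (must, U-component). Under the canonical isomorphism
\<D> \<cong> prod M(\<D>), d' \<in> L^d_alpha iff d'_n \<in> L-component of d_(n+1) at alpha for all n
(similarly for U).\<close>
definition comp :: "bool \<Rightarrow> 'a el \<Rightarrow> 'a \<Rightarrow> 'a el fset" where
  "comp m x \<alpha> = (case x of Bot \<Rightarrow> {||} | Nd f \<Rightarrow> (if m then fst (f \<alpha>) else snd (f \<alpha>)))"

definition Rel :: "bool \<Rightarrow> (nat \<Rightarrow> 'a el) \<Rightarrow> 'a \<Rightarrow> (nat \<Rightarrow> 'a el) \<Rightarrow> bool" where
  "Rel m d \<alpha> d' \<longleftrightarrow> d \<in> Dinf \<and> d' \<in> Dinf \<and> (\<forall>n. d' n |\<in>| comp m (d (Suc n)) \<alpha>)"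

datatype 'a hml = TT | Neg "'a hml" | Dia 'a "'a hml" | Conj "'a hml" "'a hml"

definition Box :: "'a \<Rightarrow> 'a hml \<Rightarrow> 'a hml" where
  "Box \<alpha> \<phi> = Neg (Dia \<alpha> (Neg \<phi>))"

definition Disj :: "'a hml \<Rightarrow> 'a hml \<Rightarrow> 'a hml" where
  "Disj \<phi> \<psi> = Neg (Conj (Neg \<phi>) (Neg \<psi>))"

definition Conjs :: "'a hml list \<Rightarrow> 'a hml" where
  "Conjs xs = foldr Conj xs TT"

definition Disjs :: "'a hml list \<Rightarrow> 'a hml" where
  "Disjs xs = Neg (Conjs (map Neg xs))"

fun sat :: "bool \<Rightarrow> (nat \<Rightarrow> 'a el) \<Rightarrow> 'a hml \<Rightarrow> bool" where
  "sat m d TT = True"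
| "sat m d (Neg \<phi>) = (\<not> sat (\<not> m) d \<phi>)"
| "sat m d (Dia \<alpha> \<phi>) = (\<exists>d'. Rel m d \<alpha> d' \<and> sat m d' \<phi>)"
| "sat m d (Conj \<phi> \<psi>) = (sat m d \<phi> \<and> sat m d \<psi>)"

datatype 'a pterm = Zero | PBot | PreT 'a "'a pterm" | PreB 'a "'a pterm"
  | Plus "'a pterm" "'a pterm"

fun wf_term :: "'a pterm \<Rightarrow> bool" where
  "wf_term Zero = True"
| "wf_term PBot = True"
| "wf_term (PreT a p) = wf_term p"
| "wf_term (PreB a p) = wf_term p"
| "wf_term (Plus p q) = (wf_term p \<and> wf_term q \<and> p \<notin> {Zero, PBot} \<and> q \<notin> {Zero, PBot})"

definition noOther :: "'a::enum \<Rightarrow> 'a hml" where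
  "noOther \<alpha> = Conjs [Neg (Dia \<beta> TT). \<beta> \<leftarrow> Enum.enum, \<beta> \<noteq> \<alpha>]"

text \<open>phi computes the characteristic formula; tphi computes, for each transition
p --alpha-->_v r, the triple (alpha, v, phi r).\<close>
fun phi :: "'a::enum pterm \<Rightarrow> 'a hml"
and tphi :: "'a::enum pterm \<Rightarrow> ('a \<times> bool \<times> 'a hml) list" where
  "phi Zero = Conjs [Neg (Dia \<alpha> TT). \<alpha> \<leftarrow> Enum.enum]"
| "phi PBot = TT"
| "phi (PreT a p) = Conj (Dia a (phi p)) (Conj (Box a (phi p)) (noOther a))"
| "phi (PreB a p) = Conj (Box a (phi p)) (noOther a)"
| "phi (Plus p q) =
     Conj (Conjs [Dia \<alpha> f. (\<alpha>, v, f) \<leftarrow> tphi p @ tphi q, v])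
          (Conjs [Box \<alpha> (Disjs [f. (\<beta>, v, f) \<leftarrow> tphi p @ tphi q, \<beta> = \<alpha>]). \<alpha> \<leftarrow> Enum.enum])"
| "tphi Zero = []"
| "tphi PBot = map (\<lambda>\<gamma>. (\<gamma>, False, TT)) Enum.enum"
| "tphi (PreT a p) = [(a, True, phi p)]"
| "tphi (PreB a p) = [(a, False, phi p)]"
| "tphi (Plus p q) = tphi p @ tphi q"

definition psi :: "'a list \<Rightarrow> 'a::enum \<Rightarrow> 'a pterm \<Rightarrow> 'a hml" where
  "psi w \<alpha> p = foldr Box w (Disj (Dia \<alpha> (phi p)) (Neg (Dia \<alpha> (phi p))))"

definition PhiSet :: "'a::enum hml set" where
  "PhiSet = {psi w \<alpha> p | w \<alpha> p. wf_term p}"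

definition CPhi :: "(nat \<Rightarrow> 'a::enum el) set" where
  "CPhi = {d \<in> Dinf. \<forall>\<psi>\<in>PhiSet. sat True d \<psi>}"

end

theory Submission
  imports Defs "HOL-Library.FuncSet"
begin

(* A maximal element d of the bilimit has a maximal component d n at every level n: an
   element x above d n extends to a compatible sequence above d, because the projections
   have a lifting property (if proj k y0 is below x, then x = proj k y for some y above y0),
   which is inherited from level to level by the mixed powerdomain construction.  At a
   maximal element of prod_alpha M(D_n) every pair (L, U) is a maximal mixed pair, and
   maximality forces U to be contained in L and to consist of maximal elements.  Hence a
   c-successor of a levelwise maximal element is also an a-successor and again levelwise
   maximal, so by induction on formulas c-satisfaction implies a-satisfaction there.  That
   is exactly what the disjunction of <alpha>phi and its negation needs under the
   a-semantics, and the box prefix of psi only moves along c-successors. *)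

lemma le_el_refl [simp]: "le x x"
  by (cases x) auto

lemma le_el_trans: "le x y \<Longrightarrow> le y z \<Longrightarrow> le x z"
  by (cases x; cases y; cases z) (simp_all add: less_eq_fset.rep_eq, blast)

lemma le_el_antisym: "le x y \<Longrightarrow> le y x \<Longrightarrow> x = y"
proof (cases x; cases y)
  fix f g assume "le x y" "le y x" "x = Nd f" "y = Nd g"
  then have "f = g"
    by (intro ext prod_eqI) (auto intro: fsubset_antisym)
  then show "x = y" using \<open>x = Nd f\<close> \<open>y = Nd g\<close> by simp
qed auto

definition mix_le :: "'a el fset \<times> 'a el fset \<Rightarrow> 'a el fset \<times> 'a el fset \<Rightarrow> bool" where
  "mix_le LU LU' \<longleftrightarrow> fst LU |\<subseteq>| fst LU' \<and> snd LU' |\<subseteq>| snd LU"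

lemma le_Nd_iff_mix_le: "le (Nd f) (Nd g) \<longleftrightarrow> (\<forall>\<alpha>. mix_le (f \<alpha>) (g \<alpha>))"
  by (simp add: mix_le_def)

definition maximals :: "'a el set \<Rightarrow> 'a el set" where
  "maximals S = {x \<in> S. \<forall>y\<in>S. le x y \<longrightarrow> y = x}"

definition maximal_mixedpair :: "'a el set \<Rightarrow> 'a el fset \<times> 'a el fset \<Rightarrow> bool" where
  "maximal_mixedpair S LU \<longleftrightarrow>
     mixedpair S LU \<and> (\<forall>LU'. mixedpair S LU' \<and> mix_le LU LU' \<longrightarrow> LU' = LU)"

lemma
  assumes "maximal_mixedpair S LU"
  shows maximal_mixedpair_mixedpair: "mixedpair S LU"
    and maximal_mixedpair_eq: "mixedpair S LU' \<Longrightarrow> mix_le LU LU' \<Longrightarrow> LU' = LU"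
  using assms unfolding maximal_mixedpair_def by blast+

lemma mixedpair_iff: "mixedpair S (L, U) \<longleftrightarrow> fset L \<subseteq> S \<and> fset U \<subseteq> S \<and>
   (\<forall>x\<in>fset L. \<forall>y\<in>S. le y x \<longrightarrow> y \<in> fset L) \<and>
   (\<forall>x\<in>fset U. \<forall>y\<in>S. le x y \<longrightarrow> y \<in> fset U) \<and>
   (\<forall>x\<in>fset L. \<exists>z\<in>fset L \<inter> fset U. le x z)"
  by (simp add: mixedpair_def)

lemma
  assumes "mixedpair S (L, U)"
  shows mixedpair_fst_subset: "fset L \<subseteq> S"
    and mixedpair_snd_subset: "fset U \<subseteq> S"
    and mixedpair_fst_down: "x \<in> fset L \<Longrightarrow> y \<in> S \<Longrightarrow> le y x \<Longrightarrow> y \<in> fset L"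
    and mixedpair_snd_up: "x \<in> fset U \<Longrightarrow> y \<in> S \<Longrightarrow> le x y \<Longrightarrow> y \<in> fset U"
    and mixedpair_fst_convex: "x \<in> fset L \<Longrightarrow> \<exists>z\<in>fset L \<inter> fset U. le x z"
  using assms by (simp_all add: mixedpair_iff)

lemma finite_fsets_subset: "finite S \<Longrightarrow> finite {A :: 'b fset. fset A \<subseteq> S}"
proof -
  assume "finite S"
  have "{A :: 'b fset. fset A \<subseteq> S} \<subseteq> Abs_fset ` Pow S"
    by (auto intro!: image_eqI[where x="fset _"] simp: fset_inverse)
  then show ?thesis using \<open>finite S\<close> by (meson finite_Pow_iff finite_imageI finite_subset)
qed

lemma finite_lvl: "finite (lvl n :: ('a::finite) el set)"
proof (induction n)
  case 0 then show ?case by simp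
next
  case (Suc n)
  define B where "B = {A :: 'a el fset. fset A \<subseteq> lvl n} \<times> {A :: 'a el fset. fset A \<subseteq> lvl n}"
  have "lvl (Suc n) \<subseteq> Nd ` ((UNIV :: 'a set) \<rightarrow>\<^sub>E B)"
  proof
    fix x :: "'a el" assume "x \<in> lvl (Suc n)"
    then obtain f where "x = Nd f" "\<forall>\<alpha>. mixedpair (lvl n) (f \<alpha>)" by auto
    moreover from this(2) have "f \<in> (UNIV :: 'a set) \<rightarrow>\<^sub>E B"
      unfolding PiE_UNIV_domain Pi_iff B_def mixedpair_def by (simp add: mem_Times_iff)
    ultimately show "x \<in> Nd ` ((UNIV :: 'a set) \<rightarrow>\<^sub>E B)" by blast
  qed
  moreover have "finite B" unfolding B_def using Suc finite_fsets_subset by blast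
  then have "finite ((UNIV :: 'a set) \<rightarrow>\<^sub>E B)" by (intro finite_PiE) auto
  ultimately show ?case by (meson finite_imageI finite_subset)
qed

lemma fset_Abs_lvl_subset:
  assumes "S \<subseteq> (lvl n :: ('a::finite) el set)"
  shows "fset (Abs_fset S) = S"
  using finite_subset[OF assms finite_lvl] by (simp add: Abs_fset_inverse)

lemma fset_dcl [simp]: "fset (dcl n A) = {y \<in> lvl n. \<exists>x\<in>fset A. le y x}"
  for A :: "('a::finite) el fset"
  unfolding dcl_def by (rule fset_Abs_lvl_subset) blast

lemma fset_ucl [simp]: "fset (ucl n A) = {y \<in> lvl n. \<exists>x\<in>fset A. le x y}"
  for A :: "('a::finite) el fset"
  unfolding ucl_def by (rule fset_Abs_lvl_subset) blast

declare lvl.simps(2) [simp del]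

lemma Nd_in_lvl_Suc [simp]: "Nd f \<in> lvl (Suc n) \<longleftrightarrow> (\<forall>\<alpha>. mixedpair (lvl n) (f \<alpha>))"
  by (simp add: lvl.simps)

lemma lvl_SucE:
  assumes "x \<in> lvl (Suc n)"
  obtains f where "x = Nd f" and "\<And>\<alpha>. mixedpair (lvl n) (f \<alpha>)"
  using assms by (auto simp: lvl.simps)

definition Mproj :: "nat \<Rightarrow> 'a el fset \<times> 'a el fset \<Rightarrow> 'a el fset \<times> 'a el fset" where
  "Mproj k LU = (dcl k (proj k |`| fst LU), ucl k (proj k |`| snd LU))"

lemma proj_Suc_Nd: "proj (Suc k) (Nd f) = Nd (\<lambda>\<alpha>. Mproj k (f \<alpha>))"
  by (simp add: Mproj_def)

lemma proj_mono: "le a b \<Longrightarrow> le (proj k a) (proj k b)"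
  for a b :: "('a::finite) el"
  by (cases k; cases a; cases b) (auto simp: less_eq_fset.rep_eq)

lemma mixedpair_Mproj:
  fixes LU :: "('a::finite) el fset \<times> 'a el fset"
  assumes proj_lvl: "\<And>x :: 'a el. x \<in> lvl (Suc k) \<Longrightarrow> proj k x \<in> lvl k"
    and LU: "mixedpair (lvl (Suc k)) LU"
  shows "mixedpair (lvl k) (Mproj k LU)"
proof -
  obtain L U where [simp]: "LU = (L, U)" by force
  have "\<exists>z\<in>fset (dcl k (proj k |`| L)) \<inter> fset (ucl k (proj k |`| U)). le y z"
    if "y \<in> fset (dcl k (proj k |`| L))" for y
  proof -
    from that obtain l where l: "l \<in> fset L" "le y (proj k l)" by auto
    with LU obtain z where z: "z \<in> fset L" "z \<in> fset U" "le l z"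
      using mixedpair_fst_convex by fastforce
    then have "proj k z \<in> lvl k" using LU mixedpair_snd_subset proj_lvl by fastforce
    moreover have "le y (proj k z)" using l z proj_mono le_el_trans by blast
    ultimately show ?thesis using z by (intro bexI[of _ "proj k z"] IntI) (auto intro!: bexI[of _ z])
  qed
  then show ?thesis by (auto simp: mixedpair_iff Mproj_def intro: le_el_trans)
qed

lemma proj_lvl: "x \<in> lvl (Suc k) \<Longrightarrow> proj k x \<in> lvl k"
  for x :: "('a::finite) el"
proof (induction k arbitrary: x)
  case (Suc k)
  from Suc.prems obtain f where "x = Nd f" "\<And>\<alpha>. mixedpair (lvl (Suc k)) (f \<alpha>)"
    by (blast elim: lvl_SucE)
  with Suc.IH show ?case by (simp only: proj_Suc_Nd Nd_in_lvl_Suc) (blast intro: mixedpair_Mproj)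
qed simp

lemma mixedpair_dcl:
  fixes U C :: "('a::finite) el fset"
  assumes "fset U \<subseteq> lvl n" and "\<And>x y. x \<in> fset U \<Longrightarrow> y \<in> lvl n \<Longrightarrow> le x y \<Longrightarrow> y \<in> fset U"
    and "C |\<subseteq>| U"
  shows "mixedpair (lvl n) (dcl n C, U)"
  using assms unfolding mixedpair_iff less_eq_fset.rep_eq
  by (intro conjI; simp) (blast intro: le_el_trans le_el_refl)+

context
  fixes k :: nat and L U L' U' :: "('a::finite) el fset"
  assumes lift: "\<And>y0 x :: 'a el. y0 \<in> lvl (Suc k) \<Longrightarrow> x \<in> lvl k \<Longrightarrow> le (proj k y0) x \<Longrightarrow>
                   \<exists>y\<in>lvl (Suc k). le y0 y \<and> proj k y = x"
    and LU: "mixedpair (lvl (Suc k)) (L, U)" and LU': "mixedpair (lvl k) (L', U')"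
    and below: "mix_le (Mproj k (L, U)) (L', U')"
begin

private lemmas U_lvl = mixedpair_snd_subset[OF LU]
  and U_up = mixedpair_snd_up[OF LU]
  and U'_lvl = mixedpair_snd_subset[OF LU']
  and U'_up = mixedpair_snd_up[OF LU']
  and L'_convex = mixedpair_fst_convex[OF LU']

private lemma
  shows below_fst: "dcl k (proj k |`| L) |\<subseteq>| L'" and below_snd: "U' |\<subseteq>| ucl k (proj k |`| U)"
  using below by (simp_all add: mix_le_def Mproj_def)

private definition U_lift :: "'a el fset" where
  "U_lift = ffilter (\<lambda>u. proj k u |\<in>| U') U"

private definition L_lift :: "'a el fset" where
  "L_lift = dcl (Suc k) (ffilter (\<lambda>c. proj k c |\<in>| L' |\<inter>| U') U)"

private lemma lift_within_U:
  assumes "u \<in> fset U" "z' \<in> lvl k" "le (proj k u) z'"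
  shows "\<exists>c\<in>fset U. le u c \<and> proj k c = z'"
  using lift[of u z'] assms U_lvl U_up by blast

private lemma U'_proj_U:
  assumes "w \<in> fset U'"
  shows "\<exists>c\<in>fset U. proj k c = w"
proof -
  from below_snd assms have "w |\<in>| ucl k (proj k |`| U)" by (rule fsubsetD)
  then obtain u where "u \<in> fset U" "le (proj k u) w" by auto
  with lift_within_U assms U'_lvl show ?thesis by blast
qed

private lemma mixedpair_lift: "mixedpair (lvl (Suc k)) (L_lift, U_lift)"
  unfolding L_lift_def
proof (rule mixedpair_dcl)
  show "fset U_lift \<subseteq> lvl (Suc k)" using U_lvl by (auto simp: U_lift_def)
  show "y \<in> fset U_lift" if "x \<in> fset U_lift" "y \<in> lvl (Suc k)" "le x y" for x y
    using that U_up U'_up proj_mono[of x y k] proj_lvl[of y k] by (auto simp: U_lift_def)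
qed (auto simp: U_lift_def)

private lemma fst_subset_L_lift: "fset L \<subseteq> fset L_lift"
proof
  fix l assume "l \<in> fset L"
  then obtain z where z: "z \<in> fset L" "z \<in> fset U" "le l z"
    using mixedpair_fst_convex[OF LU] by blast
  have "proj k z \<in> lvl k" using z(2) U_lvl proj_lvl by blast
  with z(1) have "proj k z |\<in>| dcl k (proj k |`| L)" by (auto intro!: bexI[of _ z])
  then have "proj k z \<in> fset L'" using below_fst by (rule fsubsetD[rotated])
  then obtain z' where z': "z' \<in> fset L'" "z' \<in> fset U'" "le (proj k z) z'"
    using L'_convex by blast
  with z(2) U'_lvl obtain c where "c \<in> fset U" "le z c" "proj k c = z'"
    using lift_within_U by blast
  with z' z(3) \<open>l \<in> fset L\<close> mixedpair_fst_subset[OF LU] show "l \<in> fset L_lift"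
    by (auto simp: L_lift_def intro: le_el_trans)
qed

private lemma dcl_proj_L_lift: "dcl k (proj k |`| L_lift) = L'"
proof (rule fset_eqI, rule iffI)
  fix w assume "w |\<in>| dcl k (proj k |`| L_lift)"
  then obtain y c where "w \<in> lvl k" "le w (proj k y)" "c \<in> fset U" "proj k c \<in> fset L'" "le y c"
    by (auto simp: L_lift_def)
  moreover from this have "le w (proj k c)" using proj_mono le_el_trans by blast
  ultimately show "w |\<in>| L'" using mixedpair_fst_down[OF LU'] by blast
next
  fix w assume "w |\<in>| L'"
  then obtain z' where z': "z' \<in> fset L'" "z' \<in> fset U'" "le w z'" using L'_convex by blast
  then obtain c where "c \<in> fset U" "proj k c = z'" using U'_proj_U by blast
  with z' \<open>w |\<in>| L'\<close> mixedpair_fst_subset[OF LU'] U_lvl show "w |\<in>| dcl k (proj k |`| L_lift)"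
    by (auto simp: L_lift_def intro!: bexI[of _ c])
qed

private lemma ucl_proj_U_lift: "ucl k (proj k |`| U_lift) = U'"
proof (rule fset_eqI, rule iffI)
  fix w assume "w |\<in>| ucl k (proj k |`| U_lift)"
  then show "w |\<in>| U'" using U'_up by (auto simp: U_lift_def)
next
  fix w assume "w |\<in>| U'"
  then obtain c where "c \<in> fset U" "proj k c = w" using U'_proj_U by blast
  then show "w |\<in>| ucl k (proj k |`| U_lift)"
    using \<open>w |\<in>| U'\<close> U'_lvl by (auto simp: U_lift_def intro!: bexI[of _ c])
qed

lemma Mproj_liftable:
  "\<exists>LU''. mixedpair (lvl (Suc k)) LU'' \<and> mix_le (L, U) LU'' \<and> Mproj k LU'' = (L', U')"
proof (intro exI conjI)
  show "mixedpair (lvl (Suc k)) (L_lift, U_lift)" by (rule mixedpair_lift)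
  show "mix_le (L, U) (L_lift, U_lift)"
    using fst_subset_L_lift by (auto simp: mix_le_def less_eq_fset.rep_eq U_lift_def)
  show "Mproj k (L_lift, U_lift) = (L', U')"
    using dcl_proj_L_lift ucl_proj_U_lift by (simp add: Mproj_def)
qed

end

lemma proj_liftable:
  fixes y0 x :: "('a::finite) el"
  shows "y0 \<in> lvl (Suc k) \<Longrightarrow> x \<in> lvl k \<Longrightarrow> le (proj k y0) x \<Longrightarrow>
         \<exists>y\<in>lvl (Suc k). le y0 y \<and> proj k y = x"
proof (induction k arbitrary: y0 x)
  case 0
  then show ?case by (intro bexI[of _ y0]) auto
next
  case (Suc k)
  obtain f where y0: "y0 = Nd f" and f: "\<And>\<alpha>. mixedpair (lvl (Suc k)) (f \<alpha>)"
    using Suc.prems(1) by (blast elim: lvl_SucE)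
  obtain g where x: "x = Nd g" and g: "\<And>\<alpha>. mixedpair (lvl k) (g \<alpha>)"
    using Suc.prems(2) by (blast elim: lvl_SucE)
  have "mix_le (Mproj k (f \<alpha>)) (g \<alpha>)" for \<alpha>
    using Suc.prems(3) unfolding y0 x proj_Suc_Nd le_Nd_iff_mix_le by blast
  then have "\<exists>LU''. mixedpair (lvl (Suc k)) LU'' \<and> mix_le (f \<alpha>) LU'' \<and> Mproj k LU'' = g \<alpha>" for \<alpha>
    using Mproj_liftable[OF Suc.IH, of "fst (f \<alpha>)" "snd (f \<alpha>)" "fst (g \<alpha>)" "snd (g \<alpha>)"] f g
    by simp
  then obtain H
    where "\<And>\<alpha>. mixedpair (lvl (Suc k)) (H \<alpha>) \<and> mix_le (f \<alpha>) (H \<alpha>) \<and> Mproj k (H \<alpha>) = g \<alpha>"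
    by metis
  then have "Nd H \<in> lvl (Suc (Suc k))" "le y0 (Nd H)" "proj (Suc k) (Nd H) = x"
    unfolding y0 x proj_Suc_Nd le_Nd_iff_mix_le by auto
  then show ?case by blast
qed

(* proj_from m j maps level m + j down to level m. *)
fun proj_from :: "nat \<Rightarrow> nat \<Rightarrow> 'a el \<Rightarrow> 'a el" where
  "proj_from m 0 x = x"
| "proj_from m (Suc j) x = proj m (proj_from (Suc m) j x)"

lemma proj_from_lvl: "x \<in> lvl (m + j) \<Longrightarrow> proj_from m j x \<in> lvl m"
  for x :: "('a::finite) el"
  by (induction j arbitrary: m) (simp_all add: proj_lvl)

lemma proj_from_mono: "le x y \<Longrightarrow> le (proj_from m j x) (proj_from m j y)"
  for x y :: "('a::finite) el"
  by (induction j arbitrary: m) (simp_all add: proj_mono)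

lemma proj_from_Dinf: "d \<in> Dinf \<Longrightarrow> proj_from m j (d (m + j)) = d m"
proof (induction j arbitrary: m)
  case (Suc j)
  then have "proj_from (Suc m) j (d (Suc m + j)) = d (Suc m)" by blast
  with Suc.prems show ?case by (simp add: Dinf_def)
qed simp

lemma Dinf_lift_chain:
  fixes d :: "nat \<Rightarrow> ('a::finite) el"
  assumes d: "d \<in> Dinf" and x: "x \<in> lvl n" "le (d n) x"
  obtains Y where "\<And>j. Y j \<in> lvl (n + j)" "\<And>j. le (d (n + j)) (Y j)"
    "\<And>j. proj (n + j) (Y (Suc j)) = Y j" and "Y 0 = x"
proof -
  have "\<exists>Y. \<forall>j. (Y j \<in> lvl (n + j) \<and> le (d (n + j)) (Y j) \<and> (j = 0 \<longrightarrow> Y j = x))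
              \<and> proj (n + j) (Y (Suc j)) = Y j"
  proof (rule dependent_nat_choice)
    fix z j assume z: "z \<in> lvl (n + j) \<and> le (d (n + j)) z \<and> (j = 0 \<longrightarrow> z = x)"
    have "d (Suc (n + j)) \<in> lvl (Suc (n + j))" "proj (n + j) (d (Suc (n + j))) = d (n + j)"
      using d by (simp_all add: Dinf_def)
    with z show "\<exists>z'. (z' \<in> lvl (n + Suc j) \<and> le (d (n + Suc j)) z' \<and> (Suc j = 0 \<longrightarrow> z' = x))
                      \<and> proj (n + j) z' = z"
      using proj_liftable[of "d (Suc (n + j))" "n + j" z] by auto
  qed (use x in auto)
  with that show ?thesis by blast
qed

lemma Dinf_extend:
  fixes d :: "nat \<Rightarrow> ('a::finite) el"
  assumes d: "d \<in> Dinf" and x: "x \<in> lvl n" "le (d n) x"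
  shows "\<exists>y\<in>Dinf. leD d y \<and> y n = x"
proof -
  obtain Y where Y: "\<And>j. Y j \<in> lvl (n + j)" "\<And>j. le (d (n + j)) (Y j)"
    "\<And>j. proj (n + j) (Y (Suc j)) = Y j" and Y0: "Y 0 = x"
    using Dinf_lift_chain[OF assms] by blast
  define y where "y m = (if m \<le> n then proj_from m (n - m) x else Y (m - n))" for m
  have "y m \<in> lvl m \<and> le (d m) (y m)" for m
  proof (cases "m \<le> n")
    case True
    then have "le (proj_from m (n - m) (d n)) (proj_from m (n - m) x)"
      using x proj_from_mono by blast
    with True x show ?thesis
      using proj_from_lvl[of x m "n - m"] proj_from_Dinf[OF d, of m "n - m"] by (simp add: y_def)
  next
    case False
    then show ?thesis using Y(1,2)[of "m - n"] by (simp add: y_def)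
  qed
  moreover have "proj m (y (Suc m)) = y m" for m
  proof -
    consider "Suc m \<le> n" | "m = n" | "n < m" by linarith
    then show ?thesis
    proof cases
      case 1
      then have "n - m = Suc (n - Suc m)" by simp
      with 1 show ?thesis by (simp add: y_def)
    next
      case 2
      then show ?thesis using Y(3)[of 0] Y0 by (simp add: y_def)
    next
      case 3
      then have "Suc m - n = Suc (m - n)" by simp
      with 3 show ?thesis using Y(3)[of "m - n"] by (simp add: y_def)
    qed
  qed
  ultimately have "y \<in> Dinf" "leD d y" by (simp_all add: Dinf_def leD_def)
  moreover have "y n = x" by (simp add: y_def)
  ultimately show ?thesis by blast
qed

definition levelwise_maximal :: "(nat \<Rightarrow> 'a el) set" where
  "levelwise_maximal = {d \<in> Dinf. \<forall>n. d n \<in> maximals (lvl n)}"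

lemma maxD_subset_levelwise_maximal: "(maxD :: (nat \<Rightarrow> ('a::finite) el) set) \<subseteq> levelwise_maximal"
proof
  fix d :: "nat \<Rightarrow> 'a el" assume "d \<in> maxD"
  then have d: "d \<in> Dinf" by (simp add: maxD_def)
  have "x = d n" if "x \<in> lvl n" "le (d n) x" for n x
  proof -
    from Dinf_extend[OF d that] obtain y where "y \<in> Dinf" "leD d y" "y n = x" by blast
    with \<open>d \<in> maxD\<close> show ?thesis by (auto simp: maxD_def)
  qed
  with d show "d \<in> levelwise_maximal" by (simp add: levelwise_maximal_def maximals_def Dinf_def)
qed

lemma maximals_lvl_Suc_maximal_mixedpair:
  assumes "Nd f \<in> maximals (lvl (Suc n))"
  shows "maximal_mixedpair (lvl n) (f \<alpha>)"
proof -
  have "LU = f \<alpha>" if "mixedpair (lvl n) LU" "mix_le (f \<alpha>) LU" for LU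
  proof -
    have "Nd (f(\<alpha> := LU)) \<in> lvl (Suc n)" "le (Nd f) (Nd (f(\<alpha> := LU)))"
      using assms that by (auto simp: maximals_def le_Nd_iff_mix_le mix_le_def)
    with assms have "Nd (f(\<alpha> := LU)) = Nd f" unfolding maximals_def by blast
    then show ?thesis by (metis el.inject fun_upd_same)
  qed
  with assms show ?thesis by (simp add: maximal_mixedpair_def maximals_def)
qed

(* Adding the elements below w to L keeps (L, U) a mixed pair, so maximality puts w in L. *)
lemma maximal_mixedpair_snd_subset_fst:
  assumes S: "finite S" and LU: "maximal_mixedpair S (L, U)"
  shows "fset U \<subseteq> fset L"
proof
  fix w assume w: "w \<in> fset U"
  note mp = maximal_mixedpair_mixedpair[OF LU]
  define L' where "L' = Abs_fset (fset L \<union> {y \<in> S. le y w})"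
  have fset_L': "fset L' = fset L \<union> {y \<in> S. le y w}"
    unfolding L'_def using S by (simp add: Abs_fset_inverse)
  have "mixedpair S (L', U)" unfolding mixedpair_iff fset_L'
  proof (intro conjI ballI impI)
    fix x assume "x \<in> fset L \<union> {y \<in> S. le y w}"
    then consider "x \<in> fset L" | "le x w" by blast
    then show "\<exists>z\<in>(fset L \<union> {y \<in> S. le y w}) \<inter> fset U. le x z"
    proof cases
      case 1
      then show ?thesis using mixedpair_fst_convex[OF mp] by blast
    next
      case 2
      then show ?thesis using w mixedpair_snd_subset[OF mp] by (intro bexI[of _ w]) auto
    qed
  next
    fix x y assume "x \<in> fset L \<union> {y \<in> S. le y w}" "y \<in> S" "le y x"
    then show "y \<in> fset L \<union> {y \<in> S. le y w}"
      using mixedpair_fst_down[OF mp] le_el_trans by blast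
  qed (use mp in \<open>auto simp: mixedpair_iff\<close>)
  moreover have "mix_le (L, U) (L', U)" by (auto simp: mix_le_def less_eq_fset.rep_eq fset_L')
  ultimately have "L' = L" using maximal_mixedpair_eq[OF LU] by blast
  then show "w \<in> fset L" using fset_L' w mixedpair_snd_subset[OF mp] by auto
qed

(* If u < v for some u in U, then v lies in L and in U, and dropping the elements below u
   from U still gives a mixed pair, since v lies above everything they covered. *)
lemma maximal_mixedpair_snd_maximals:
  assumes S: "finite S" and LU: "maximal_mixedpair S (L, U)"
  shows "fset U \<subseteq> maximals S"
proof
  fix u assume u: "u \<in> fset U"
  note mp = maximal_mixedpair_mixedpair[OF LU]
  have "v = u" if v: "v \<in> S" "le u v" for v
  proof (rule ccontr)
    assume "v \<noteq> u"
    then have v_not_le: "\<not> le v u" using le_el_antisym v(2) by blast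
    have v_LU: "v \<in> fset L" "v \<in> fset U"
      using mixedpair_snd_up[OF mp u v] maximal_mixedpair_snd_subset_fst[OF S LU] by auto
    define U' where "U' = ffilter (\<lambda>y. \<not> le y u) U"
    have "mixedpair S (L, U')" unfolding mixedpair_iff
    proof (intro conjI ballI impI)
      fix x assume "x \<in> fset L"
      then obtain z where z: "z \<in> fset L" "z \<in> fset U" "le x z"
        using mixedpair_fst_convex[OF mp] by blast
      show "\<exists>z\<in>fset L \<inter> fset U'. le x z"
      proof (cases "le z u")
        case True
        then have "le x v" using z(3) v(2) le_el_trans by blast
        then show ?thesis using v_LU v_not_le by (auto simp: U'_def)
      next
        case False
        then show ?thesis using z by (auto simp: U'_def)
      qed
    next
      fix x y assume "x \<in> fset U'" "y \<in> S" "le x y"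
      then show "y \<in> fset U'"
        using mixedpair_snd_up[OF mp] le_el_trans[of x y u] by (auto simp: U'_def)
    qed (use mp in \<open>auto simp: mixedpair_iff U'_def\<close>)
    moreover have "mix_le (L, U) (L, U')" by (auto simp: mix_le_def U'_def)
    ultimately have "U' = U" using maximal_mixedpair_eq[OF LU] by blast
    moreover have "u |\<notin>| U'" by (simp add: U'_def)
    ultimately show False using u by simp
  qed
  with u mixedpair_snd_subset[OF mp] show "u \<in> maximals S" by (auto simp: maximals_def)
qed

lemma Rel_must_levelwise_maximal:
  fixes d :: "nat \<Rightarrow> ('a::finite) el"
  assumes d: "d \<in> levelwise_maximal" and "Rel False d \<alpha> d'"
  shows "Rel True d \<alpha> d'" and "d' \<in> levelwise_maximal"
proof -
  have d_Dinf: "d \<in> Dinf" and d_max: "\<And>n. d n \<in> maximals (lvl n)"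
    using d by (simp_all add: levelwise_maximal_def)
  have succ: "\<And>n. d' n |\<in>| comp False (d (Suc n)) \<alpha>" and d'_Dinf: "d' \<in> Dinf"
    using \<open>Rel False d \<alpha> d'\<close> by (simp_all add: Rel_def)
  have "d' n |\<in>| comp True (d (Suc n)) \<alpha> \<and> d' n \<in> maximals (lvl n)" for n
  proof -
    obtain f where f: "d (Suc n) = Nd f"
      using d_max[of "Suc n"] by (auto simp: maximals_def elim: lvl_SucE)
    with d_max have "Nd f \<in> maximals (lvl (Suc n))" by metis
    then have "maximal_mixedpair (lvl n) (fst (f \<alpha>), snd (f \<alpha>))"
      by (simp add: maximals_lvl_Suc_maximal_mixedpair)
    moreover have "d' n \<in> fset (snd (f \<alpha>))" using succ[of n] f by (simp add: comp_def)
    ultimately have "d' n \<in> fset (fst (f \<alpha>))" "d' n \<in> maximals (lvl n)"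
      using maximal_mixedpair_snd_subset_fst[OF finite_lvl]
        maximal_mixedpair_snd_maximals[OF finite_lvl]
      by blast+
    then show ?thesis using f by (simp add: comp_def)
  qed
  with d_Dinf d'_Dinf show "Rel True d \<alpha> d'" "d' \<in> levelwise_maximal"
    by (simp_all add: Rel_def levelwise_maximal_def)
qed

lemma sat_must_imp_may:
  fixes d :: "nat \<Rightarrow> ('a::finite) el"
  shows "d \<in> levelwise_maximal \<Longrightarrow> sat False d \<phi> \<Longrightarrow> sat True d \<phi>"
proof (induction \<phi> arbitrary: d)
  case (Dia \<alpha> \<phi>)
  then obtain d' where "Rel False d \<alpha> d'" "sat False d' \<phi>" by auto
  with Dia.prems(1) Dia.IH show ?case by (auto dest: Rel_must_levelwise_maximal)
qed auto

lemma sat_may_Boxes_excluded_middle: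
  fixes d :: "nat \<Rightarrow> ('a::finite) el"
  shows "d \<in> levelwise_maximal \<Longrightarrow> sat True d (foldr Box w (Disj \<phi> (Neg \<phi>)))"
proof (induction w arbitrary: d)
  case Nil
  then show ?case using sat_must_imp_may[of d \<phi>] by (auto simp: Disj_def)
next
  case (Cons \<delta> w)
  then show ?case by (auto simp: Box_def dest: Rel_must_levelwise_maximal(2))
qed

theorem lemma3p18:
  shows "(maxD :: (nat \<Rightarrow> 'a::enum el) set) \<subseteq> CPhi"
proof
  fix d :: "nat \<Rightarrow> 'a el" assume "d \<in> maxD"
  then have "d \<in> levelwise_maximal" using maxD_subset_levelwise_maximal by blast
  then show "d \<in> CPhi"
    using sat_may_Boxes_excluded_middle
    by (auto simp: CPhi_def PhiSet_def psi_def levelwise_maximal_def)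
qed

end
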